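(* Let $a$ be an element of a C$^*$-algebra $A$. (1) If $A$ is unital, then $s_{[1_A]_0}(a)=0$. (2) If $A$ admits an approximate unit consisting of projections, then $s(a)$ vanishes at infinity, i.e. for every $\varepsilon>0$ there exists $g\in K_0(A)^+$ such that $s_h(a)<\varepsilon$ for all $h\in K_0(A)^+$ with $g\leq h$.
   Context: For a C$^*$-algebra $A$, $P(A)$ denotes the set of projections of $A$, $K_0(A)$ is the usual $K_0$-group with positive cone $K_0(A)^+=\{[p]_0 : p \text{ a projection in } M_n(A),\ n\geq1\}$, and $g\leq h$ means $h-g\in K_0(A)^+$ (a preorder). The singular value function of $a\in A$ is the function $s(a)\colon K_0(A)^+\to[0,\infty)$ defined by \[ s_g(a):=\inf\{\|a-ap\| \mid p\in P(A),\ [p]_0\leq g\},\qquad g\in K_0(A)^+. \] *)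

theory Defs
  imports "HOL-Analysis.Analysis" "HOL-Library.Product_Plus"
begin

text \<open>A C*-algebra is modelled as a real Banach algebra type 'a together with a complex
  scalar multiplication scC (compatible with the real one) and an involution star,
  satisfying the C*-identity.\<close>

definition cstar_algebra ::
  "(complex \<Rightarrow> 'a::{real_normed_algebra,banach} \<Rightarrow> 'a) \<Rightarrow> ('a \<Rightarrow> 'a) \<Rightarrow> bool" where
  "cstar_algebra scC star \<longleftrightarrow>
     (\<forall>r x. scC (complex_of_real r) x = scaleR r x) \<and>
     (\<forall>c d x. scC (c + d) x = scC c x + scC d x) \<and>
     (\<forall>c x y. scC c (x + y) = scC c x + scC c y) \<and>
     (\<forall>c d x. scC (c * d) x = scC c (scC d x)) \<and>
     (\<forall>c x y. scC c (x * y) = scC c x * y \<and> scC c (x * y) = x * scC c y) \<and>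
     (\<forall>c x. norm (scC c x) = cmod c * norm x) \<and>
     (\<forall>x y. star (x + y) = star x + star y) \<and>
     (\<forall>c x. star (scC c x) = scC (cnj c) (star x)) \<and>
     (\<forall>x y. star (x * y) = star y * star x) \<and>
     (\<forall>x. star (star x) = x) \<and>
     (\<forall>x. norm (star x * x) = (norm x)\<^sup>2)"

definition is_proj :: "('a::ring \<Rightarrow> 'a) \<Rightarrow> 'a \<Rightarrow> bool" where
  "is_proj star p \<longleftrightarrow> star p = p \<and> p * p = p"

definition positive :: "('a::ring \<Rightarrow> 'a) \<Rightarrow> 'a \<Rightarrow> bool" where
  "positive star a \<longleftrightarrow> (\<exists>x. a = star x * x)"

definition is_unit_of :: "'a::ring \<Rightarrow> bool" where
  "is_unit_of e \<longleftrightarrow> (\<forall>x. e * x = x \<and> x * e = x)"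

definition approx_unit_proj ::
  "('a::{real_normed_algebra} \<Rightarrow> 'a) \<Rightarrow> 'i set \<Rightarrow> ('i \<Rightarrow> 'i \<Rightarrow> bool) \<Rightarrow> ('i \<Rightarrow> 'a) \<Rightarrow> bool" where
  "approx_unit_proj star \<Lambda> le u \<longleftrightarrow>
     \<Lambda> \<noteq> {} \<and>
     (\<forall>i\<in>\<Lambda>. le i i) \<and>
     (\<forall>i\<in>\<Lambda>. \<forall>j\<in>\<Lambda>. \<forall>k\<in>\<Lambda>. le i j \<and> le j k \<longrightarrow> le i k) \<and>
     (\<forall>i\<in>\<Lambda>. \<forall>j\<in>\<Lambda>. \<exists>k\<in>\<Lambda>. le i k \<and> le j k) \<and>
     (\<forall>i\<in>\<Lambda>. is_proj star (u i)) \<and>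
     (\<forall>i\<in>\<Lambda>. \<forall>j\<in>\<Lambda>. le i j \<longrightarrow> positive star (u j - u i)) \<and>
     (\<forall>x. \<forall>\<epsilon>>0. \<exists>i0\<in>\<Lambda>. \<forall>i\<in>\<Lambda>. le i0 i \<longrightarrow>
          norm (x - x * u i) < \<epsilon> \<and> norm (x - u i * x) < \<epsilon>)"

text \<open>The unitization \<open>A~ = A \<oplus> \<complex>\<close>, elements are pairs (a, lambda).\<close>
definition ux_mult :: "(complex \<Rightarrow> 'a::ring \<Rightarrow> 'a) \<Rightarrow> 'a \<times> complex \<Rightarrow> 'a \<times> complex \<Rightarrow> 'a \<times> complex" where
  "ux_mult scC x y = (fst x * fst y + scC (snd x) (fst y) + scC (snd y) (fst x), snd x * snd y)"

definition ux_star :: "('a \<Rightarrow> 'a) \<Rightarrow> 'a \<times> complex \<Rightarrow> 'a \<times> complex" where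
  "ux_star star x = (star (fst x), cnj (snd x))"

text \<open>Matrices are functions nat \<Rightarrow> nat \<Rightarrow> entries; a matrix in M_N has all entries with
  an index \<ge> N equal to 0.\<close>
definition is_mat :: "nat \<Rightarrow> (nat \<Rightarrow> nat \<Rightarrow> 'b::zero) \<Rightarrow> bool" where
  "is_mat N x \<longleftrightarrow> (\<forall>i j. N \<le> i \<or> N \<le> j \<longrightarrow> x i j = 0)"

definition mmul :: "(complex \<Rightarrow> 'a::ring \<Rightarrow> 'a) \<Rightarrow> nat \<Rightarrow>
    (nat \<Rightarrow> nat \<Rightarrow> 'a \<times> complex) \<Rightarrow> (nat \<Rightarrow> nat \<Rightarrow> 'a \<times> complex) \<Rightarrow> (nat \<Rightarrow> nat \<Rightarrow> 'a \<times> complex)" where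
  "mmul scC N x y = (\<lambda>i j. \<Sum>k<N. ux_mult scC (x i k) (y k j))"

definition mstar :: "('a \<Rightarrow> 'a) \<Rightarrow> (nat \<Rightarrow> nat \<Rightarrow> 'a \<times> complex) \<Rightarrow> (nat \<Rightarrow> nat \<Rightarrow> 'a \<times> complex)" where
  "mstar star x = (\<lambda>i j. ux_star star (x j i))"

definition lift :: "(nat \<Rightarrow> nat \<Rightarrow> 'a::zero) \<Rightarrow> (nat \<Rightarrow> nat \<Rightarrow> 'a \<times> complex)" where
  "lift p = (\<lambda>i j. (p i j, 0))"

definition is_proj_mat :: "(complex \<Rightarrow> 'a::ring \<Rightarrow> 'a) \<Rightarrow> ('a \<Rightarrow> 'a) \<Rightarrow> nat \<Rightarrow>
    (nat \<Rightarrow> nat \<Rightarrow> 'a \<times> complex) \<Rightarrow> bool" where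
  "is_proj_mat scC star N p \<longleftrightarrow> is_mat N p \<and> mstar star p = p \<and> mmul scC N p p = p"

definition Pinf :: "(complex \<Rightarrow> 'a::ring \<Rightarrow> 'a) \<Rightarrow> ('a \<Rightarrow> 'a) \<Rightarrow> (nat \<times> (nat \<Rightarrow> nat \<Rightarrow> 'a)) set" where
  "Pinf scC star = {(n, p). is_proj_mat scC star n (lift p)}"

definition dsum :: "nat \<times> (nat \<Rightarrow> nat \<Rightarrow> 'b::zero) \<Rightarrow> nat \<times> (nat \<Rightarrow> nat \<Rightarrow> 'b) \<Rightarrow> nat \<times> (nat \<Rightarrow> nat \<Rightarrow> 'b)" where
  "dsum P Q = (fst P + fst Q, (\<lambda>i j.
     if i < fst P \<and> j < fst P then snd P i j
     else if fst P \<le> i \<and> fst P \<le> j then snd Q (i - fst P) (j - fst P) else 0))"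

definition unit_mat :: "nat \<Rightarrow> (nat \<Rightarrow> nat \<Rightarrow> 'a::zero \<times> complex)" where
  "unit_mat k = (\<lambda>i j. if i = j \<and> i < k then (0, 1) else (0, 0))"

definition mvn :: "(complex \<Rightarrow> 'a::ring \<Rightarrow> 'a) \<Rightarrow> ('a \<Rightarrow> 'a) \<Rightarrow>
    (nat \<Rightarrow> nat \<Rightarrow> 'a \<times> complex) \<Rightarrow> (nat \<Rightarrow> nat \<Rightarrow> 'a \<times> complex) \<Rightarrow> bool" where
  "mvn scC star p q \<longleftrightarrow> (\<exists>N v. is_mat N v \<and>
      mmul scC N (mstar star v) v = p \<and> mmul scC N v (mstar star v) = q)"

text \<open>[P]_0 = [Q]_0 in K_0(A) (subgroup of K_0 of the unitization): P \<oplus> 1_k ~_0 Q \<oplus> 1_k.\<close>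
definition k0eq :: "(complex \<Rightarrow> 'a::ring \<Rightarrow> 'a) \<Rightarrow> ('a \<Rightarrow> 'a) \<Rightarrow>
    nat \<times> (nat \<Rightarrow> nat \<Rightarrow> 'a) \<Rightarrow> nat \<times> (nat \<Rightarrow> nat \<Rightarrow> 'a) \<Rightarrow> bool" where
  "k0eq scC star P Q \<longleftrightarrow> (\<exists>k.
      mvn scC star (snd (dsum (fst P, lift (snd P)) (k, unit_mat k)))
                   (snd (dsum (fst Q, lift (snd Q)) (k, unit_mat k))))"

text \<open>The class [P]_0, as a set of representatives in P_\<infinity>(A).\<close>
definition k0cls :: "(complex \<Rightarrow> 'a::ring \<Rightarrow> 'a) \<Rightarrow> ('a \<Rightarrow> 'a) \<Rightarrow>
    nat \<times> (nat \<Rightarrow> nat \<Rightarrow> 'a) \<Rightarrow> (nat \<times> (nat \<Rightarrow> nat \<Rightarrow> 'a)) set" where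
  "k0cls scC star P = {Q \<in> Pinf scC star. k0eq scC star P Q}"

definition K0pos :: "(complex \<Rightarrow> 'a::ring \<Rightarrow> 'a) \<Rightarrow> ('a \<Rightarrow> 'a) \<Rightarrow> (nat \<times> (nat \<Rightarrow> nat \<Rightarrow> 'a)) set set" where
  "K0pos scC star = k0cls scC star ` Pinf scC star"

text \<open>g \<le> h iff h - g \<in> K_0(A)^+, i.e. h = g + [R]_0 = [P \<oplus> R]_0 for some R, P with g = [P]_0.\<close>
definition k0le :: "(complex \<Rightarrow> 'a::ring \<Rightarrow> 'a) \<Rightarrow> ('a \<Rightarrow> 'a) \<Rightarrow>
    (nat \<times> (nat \<Rightarrow> nat \<Rightarrow> 'a)) set \<Rightarrow> (nat \<times> (nat \<Rightarrow> nat \<Rightarrow> 'a)) set \<Rightarrow> bool" where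
  "k0le scC star g h \<longleftrightarrow> (\<exists>P\<in>g. \<exists>R\<in>Pinf scC star. k0cls scC star (dsum P R) = h)"

definition elem_mat :: "'a::zero \<Rightarrow> nat \<times> (nat \<Rightarrow> nat \<Rightarrow> 'a)" where
  "elem_mat p = (1, (\<lambda>i j. if i = 0 \<and> j = 0 then p else 0))"

definition sval :: "(complex \<Rightarrow> 'a::real_normed_algebra \<Rightarrow> 'a) \<Rightarrow> ('a \<Rightarrow> 'a) \<Rightarrow>
    (nat \<times> (nat \<Rightarrow> nat \<Rightarrow> 'a)) set \<Rightarrow> 'a \<Rightarrow> real" where
  "sval scC star g a = Inf {norm (a - a * p) | p.
      is_proj star p \<and> k0le scC star (k0cls scC star (elem_mat p)) g}"

end

theory Submission
  imports Defs
begin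

text \<open>Every projection p with [p]_0 \<le> g bounds s_g(a) by \<parallel>a - a p\<parallel>. For a unit e one takes
  g = [e]_0 and p = e, where a - a e = 0. Given an approximate unit of projections, choose
  u_i with \<parallel>a - a u_i\<parallel> < \<epsilon> and g = [u_i]_0: for every h \<ge> g the projection u_i
  itself is admissible in the infimum defining s_h(a).\<close>

lemma cstar_algebra_scC_zero:
  assumes "cstar_algebra scC star"
  shows "scC 0 x = 0"
  using assms unfolding cstar_algebra_def by (metis of_real_0 scaleR_zero_left)

lemma cstar_algebra_star_zero:
  assumes "cstar_algebra scC star"
  shows "star 0 = 0"
proof -
  have "star (0 + 0) = star 0 + star 0"
    using assms unfolding cstar_algebra_def by blast
  then show ?thesis by simp
qed

lemma cstar_algebra_is_proj_unit:
  assumes "cstar_algebra scC star" and e: "is_unit_of e"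
  shows "is_proj star e"
proof -
  have star_star: "\<And>x. star (star x) = x" and star_mult: "\<And>x y. star (x * y) = star y * star x"
    using assms(1) unfolding cstar_algebra_def by blast+
  have "e = star (star e * e)" using e star_star by (simp add: is_unit_of_def)
  also have "\<dots> = star e * star (star e)" by (rule star_mult)
  also have "\<dots> = star e" using e star_star by (simp add: is_unit_of_def)
  finally show ?thesis using e by (simp add: is_proj_def is_unit_of_def)
qed

lemma elem_mat_in_Pinf:
  assumes cs: "cstar_algebra scC star" and p: "is_proj star p"
  shows "elem_mat p \<in> Pinf scC star"
proof -
  let ?x = "lift (\<lambda>i j. if i = 0 \<and> j = 0 then p else 0)"
  have "is_mat 1 ?x" by (auto simp: is_mat_def lift_def zero_prod_def)
  moreover have "mstar star ?x = ?x"
    using p cstar_algebra_star_zero[OF cs]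
    by (auto simp: mstar_def ux_star_def lift_def is_proj_def fun_eq_iff)
  moreover have "mmul scC 1 ?x ?x = ?x"
    using p cstar_algebra_scC_zero[OF cs]
    by (auto simp: mmul_def ux_mult_def lift_def is_proj_def fun_eq_iff)
  ultimately show ?thesis by (simp add: elem_mat_def Pinf_def is_proj_mat_def)
qed

lemma zero_mat_in_Pinf:
  assumes "cstar_algebra scC star"
  shows "(0, \<lambda>i j. 0) \<in> Pinf scC star"
  using cstar_algebra_star_zero[OF assms]
  by (simp add: Pinf_def is_proj_mat_def is_mat_def mstar_def mmul_def lift_def ux_star_def
      fun_eq_iff zero_prod_def)

lemma dsum_zero_mat_right:
  assumes "(n, p) \<in> Pinf scC star"
  shows "dsum (n, p) (0, \<lambda>i j. 0) = (n, p)"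
  using assms by (auto simp: Pinf_def is_proj_mat_def is_mat_def lift_def dsum_def fun_eq_iff
      zero_prod_def)

lemma k0eq_refl:
  assumes "P \<in> Pinf scC star"
  shows "k0eq scC star P P"
proof -
  obtain n p where P: "P = (n, p)" by fastforce
  have pm: "is_proj_mat scC star n (lift p)" using assms P by (simp add: Pinf_def)
  have "snd (dsum (n, lift p) (0, unit_mat 0)) = lift p"
    using pm by (auto simp: dsum_def unit_mat_def is_proj_mat_def is_mat_def fun_eq_iff lift_def
        zero_prod_def)
  moreover have "mvn scC star (lift p) (lift p)"
    unfolding mvn_def using pm by (intro exI[of _ n] exI[of _ "lift p"]) (simp add: is_proj_mat_def)
  ultimately show ?thesis unfolding k0eq_def P by (intro exI[of _ 0]) simp
qed

lemma mem_k0cls_self: "P \<in> Pinf scC star \<Longrightarrow> P \<in> k0cls scC star P"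
  by (simp add: k0cls_def k0eq_refl)

lemma k0le_refl:
  assumes cs: "cstar_algebra scC star" and P: "P \<in> Pinf scC star"
  shows "k0le scC star (k0cls scC star P) (k0cls scC star P)"
proof -
  obtain n p where "P = (n, p)" by fastforce
  then have "dsum P (0, \<lambda>i j. 0) = P" using P dsum_zero_mat_right by blast
  then show ?thesis unfolding k0le_def
    using mem_k0cls_self[OF P] zero_mat_in_Pinf[OF cs] by metis
qed

lemma sval_le_norm:
  assumes "is_proj star p" "k0le scC star (k0cls scC star (elem_mat p)) g"
  shows "sval scC star g a \<le> norm (a - a * p)"
  unfolding sval_def by (rule cInf_lower) (use assms in \<open>auto intro!: bdd_belowI[of _ 0]\<close>)

lemma sval_nonneg:
  assumes "is_proj star p" "k0le scC star (k0cls scC star (elem_mat p)) g"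
  shows "sval scC star g a \<ge> 0"
  unfolding sval_def by (rule cInf_greatest) (use assms in auto)

lemma sval_unit_eq_0:
  assumes cs: "cstar_algebra scC star" and "is_unit_of e"
  shows "sval scC star (k0cls scC star (elem_mat e)) a = 0"
proof -
  have p: "is_proj star e" by (rule cstar_algebra_is_proj_unit[OF assms])
  have le: "k0le scC star (k0cls scC star (elem_mat e)) (k0cls scC star (elem_mat e))"
    by (rule k0le_refl[OF cs elem_mat_in_Pinf[OF cs p]])
  have "norm (a - a * e) = 0" using \<open>is_unit_of e\<close> by (simp add: is_unit_of_def)
  with sval_le_norm[OF p le, of a] sval_nonneg[OF p le, of a] show ?thesis by linarith
qed

lemma approx_unit_proj_right_approx:
  assumes "approx_unit_proj star \<Lambda> le u" and "\<epsilon> > 0"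
  obtains i where "is_proj star (u i)" and "norm (a - a * u i) < \<epsilon>"
proof -
  obtain i0 where "i0 \<in> \<Lambda>" and "\<forall>i\<in>\<Lambda>. le i0 i \<longrightarrow> norm (a - a * u i) < \<epsilon>"
    using assms unfolding approx_unit_proj_def by meson
  moreover have "le i0 i0" and "is_proj star (u i0)"
    using assms(1) \<open>i0 \<in> \<Lambda>\<close> unfolding approx_unit_proj_def by blast+
  ultimately show ?thesis using that by blast
qed

lemma sval_vanishes_at_infinity:
  assumes cs: "cstar_algebra scC star" and au: "approx_unit_proj star \<Lambda> le u" and "\<epsilon> > 0"
  shows "\<exists>g\<in>K0pos scC star. \<forall>h\<in>K0pos scC star. k0le scC star g h \<longrightarrow> sval scC star h a < \<epsilon>"
proof -
  obtain i where p: "is_proj star (u i)" and small: "norm (a - a * u i) < \<epsilon>"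
    using approx_unit_proj_right_approx[OF au \<open>\<epsilon> > 0\<close>] .
  have "k0cls scC star (elem_mat (u i)) \<in> K0pos scC star"
    using elem_mat_in_Pinf[OF cs p] by (simp add: K0pos_def)
  moreover have "sval scC star h a < \<epsilon>" if "k0le scC star (k0cls scC star (elem_mat (u i))) h" for h
    using sval_le_norm[OF p that, of a] small by linarith
  ultimately show ?thesis by blast
qed

theorem proposition3p4:
  fixes scC :: "complex \<Rightarrow> 'a::{real_normed_algebra,banach} \<Rightarrow> 'a"
    and star :: "'a \<Rightarrow> 'a"
    and a :: 'a
  assumes "cstar_algebra scC star"
  shows "(\<forall>e. is_unit_of e \<longrightarrow> sval scC star (k0cls scC star (elem_mat e)) a = 0)
       \<and> ((\<exists>(\<Lambda> :: 'i set) le u. approx_unit_proj star \<Lambda> le u) \<longrightarrow>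
          (\<forall>\<epsilon>>0. \<exists>g\<in>K0pos scC star. \<forall>h\<in>K0pos scC star.
              k0le scC star g h \<longrightarrow> sval scC star h a < \<epsilon>))"
  using sval_unit_eq_0[OF assms] sval_vanishes_at_infinity[OF assms] by blast

end
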